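(* Let $X$ be an infinite-dimensional complex separable Hilbert space, $A\in\mathcal B(X)$, $0<\tau<\infty$, and $\mathcal G\subset X$ countable. If $\{e^{tA^*}g\}_{g\in\mathcal G,\,t\in[0,\tau)}$ is a semi-continuous frame for $X$, then $\mathcal G$ is infinite.
   Context: $e^{tA^*}=\sum_{n\ge0}(tA^* )^n/n!$. The family $\{e^{tA^*}g\}_{g\in\mathcal G,t\in[0,\tau)}$ is a semi-continuous frame if there are $c_1,c_2>0$ with $c_1\|x\|^2\le\sum_{g\in\mathcal G}\int_0^\tau|\langle x,e^{tA^*}g\rangle|^2dt\le c_2\|x\|^2$ for all $x\in X$. *)

theory Defs
  imports "HOL-Analysis.Analysis"
begin

text \<open>Complex Hilbert spaces: a Banach space (over the reals) equipped with a complex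
scalar multiplication extending the real one and a complex inner product
(linear in the first argument, conjugate symmetric) inducing the norm.\<close>

class complex_hilbert = banach +
  fixes scaleC :: "complex \<Rightarrow> 'a \<Rightarrow> 'a"
    and cinner :: "'a \<Rightarrow> 'a \<Rightarrow> complex"
  assumes scaleC_of_real: "scaleC (complex_of_real r) x = scaleR r x"
    and scaleC_add_right: "scaleC a (x + y) = scaleC a x + scaleC a y"
    and scaleC_add_left: "scaleC (a + b) x = scaleC a x + scaleC b x"
    and scaleC_scaleC: "scaleC a (scaleC b x) = scaleC (a * b) x"
    and cinner_add_left: "cinner (x + y) z = cinner x z + cinner y z"
    and cinner_scaleC_left: "cinner (scaleC a x) y = a * cinner x y"
    and cinner_commute: "cinner y x = cnj (cinner x y)"
    and norm_eq_sqrt_cinner: "norm x = sqrt (Re (cinner x x))"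

definition separable_hilbert :: "'a::complex_hilbert itself \<Rightarrow> bool" where
  "separable_hilbert _ \<longleftrightarrow> (\<exists>D::'a set. countable D \<and> closure D = UNIV)"

definition finite_dim_complex :: "'a::complex_hilbert itself \<Rightarrow> bool" where
  "finite_dim_complex _ \<longleftrightarrow>
     (\<exists>S::'a set. finite S \<and> (\<forall>x. \<exists>c. x = (\<Sum>s\<in>S. scaleC (c s) s)))"

definition bounded_clinear_op :: "('a::complex_hilbert \<Rightarrow> 'a) \<Rightarrow> bool" where
  "bounded_clinear_op A \<longleftrightarrow>
     (\<forall>x y. A (x + y) = A x + A y) \<and> (\<forall>a x. A (scaleC a x) = scaleC a (A x)) \<and>
     (\<exists>K. \<forall>x. norm (A x) \<le> K * norm x)"

definition adjoint :: "('a::complex_hilbert \<Rightarrow> 'a) \<Rightarrow> ('a \<Rightarrow> 'a)" where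
  "adjoint A = (\<lambda>y. THE z. \<forall>x. cinner (A x) y = cinner x z)"

definition exp_op :: "real \<Rightarrow> ('a::complex_hilbert \<Rightarrow> 'a) \<Rightarrow> 'a \<Rightarrow> 'a" where
  "exp_op t B g = (\<Sum>n. scaleR (t ^ n / fact n) ((B ^^ n) g))"

definition semi_continuous_frame ::
    "('a::complex_hilbert \<Rightarrow> 'a) \<Rightarrow> 'a set \<Rightarrow> real \<Rightarrow> bool" where
  "semi_continuous_frame A G \<tau> \<longleftrightarrow>
     (\<exists>c1 c2. c1 > 0 \<and> c2 > 0 \<and>
        (\<forall>x. ennreal (c1 * (norm x)\<^sup>2)
               \<le> (\<Sum>\<^sub>\<infinity>g\<in>G. \<integral>\<^sup>+ t\<in>{0..<\<tau>}. ennreal ((cmod (cinner x (exp_op t (adjoint A) g)))\<^sup>2) \<partial>lborel)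
          \<and> (\<Sum>\<^sub>\<infinity>g\<in>G. \<integral>\<^sup>+ t\<in>{0..<\<tau>}. ennreal ((cmod (cinner x (exp_op t (adjoint A) g)))\<^sup>2) \<partial>lborel)
               \<le> ennreal (c2 * (norm x)\<^sup>2)))"

end

theory Submission
  imports Defs
begin

text \<open>If \<open>G\<close> were finite, the orbit pieces \<open>{e\<^sup>t\<^sup>A\<^sup>* g | g \<in> G, 0 \<le> t \<le> \<tau>}\<close> would form a
  compact set, since \<open>A\<^sup>*\<close> is bounded and so \<open>t \<mapsto> e\<^sup>t\<^sup>A\<^sup>* g\<close> is continuous. In infinite
  dimension a compact set cannot satisfy a lower frame bound: cover it by finitely many
  \<open>\<epsilon>\<close>-balls and take a unit vector orthogonal to their centres; its inner product with every
  point of the set is below \<open>\<epsilon>\<close>, so the frame integral is at most \<open>|G| \<tau> \<epsilon>\<^sup>2 < c\<^sub>1\<close> for small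
  \<open>\<epsilon>\<close>.\<close>

lemma cinner_zero_left [simp]: "cinner 0 (y::'a::complex_hilbert) = 0"
  using cinner_add_left[of "0::'a" 0 y] by simp

lemma cinner_zero_right [simp]: "cinner (x::'a::complex_hilbert) 0 = 0"
  by (subst cinner_commute) simp

lemma cinner_add_right: "cinner (x::'a::complex_hilbert) (y + z) = cinner x y + cinner x z"
  by (subst (1 2 3) cinner_commute) (simp add: cinner_add_left)

lemma cinner_diff_left: "cinner (x - y::'a::complex_hilbert) z = cinner x z - cinner y z"
  using cinner_add_left[of "x - y" y z] by simp

lemma cinner_diff_right: "cinner (x::'a::complex_hilbert) (y - z) = cinner x y - cinner x z"
  by (subst (1 2 3) cinner_commute) (simp add: cinner_diff_left)

lemma cinner_scaleC_right: "cinner (x::'a::complex_hilbert) (scaleC a y) = cnj a * cinner x y"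
  by (subst (1 2) cinner_commute) (simp add: cinner_scaleC_left)

lemma cinner_scaleR_left: "cinner (scaleR r x::'a::complex_hilbert) y = of_real r * cinner x y"
  by (metis scaleC_of_real cinner_scaleC_left)

lemma cinner_scaleR_right: "cinner (x::'a::complex_hilbert) (scaleR r y) = of_real r * cinner x y"
  by (metis scaleC_of_real cinner_scaleC_right complex_cnj_complex_of_real)

lemma cinner_self: "cinner (x::'a::complex_hilbert) x = of_real ((norm x)\<^sup>2)"
proof -
  have "Im (cinner x x) = 0"
    using cinner_commute[of x x] by (metis cnj.sel(2) neg_equal_zero)
  moreover have "Re (cinner x x) = (norm x)\<^sup>2"
    using norm_eq_sqrt_cinner[of x] norm_ge_zero[of x]
    by (metis real_sqrt_ge_0_iff real_sqrt_pow2)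
  ultimately show ?thesis by (simp add: complex_eq_iff)
qed

lemma scaleC_zero_left [simp]: "scaleC 0 (x::'a::complex_hilbert) = 0"
  using scaleC_of_real[of 0 x] by simp

lemma norm_diff_projection_squared:
  fixes x y :: "'a::complex_hilbert"
  assumes "y \<noteq> 0"
  shows "(norm (x - scaleC (cinner x y / of_real ((norm y)\<^sup>2)) y))\<^sup>2
         = (norm x)\<^sup>2 - (cmod (cinner x y))\<^sup>2 / (norm y)\<^sup>2"
proof -
  define p where "p = cinner x y"
  define N where "N = (norm y)\<^sup>2"
  define l where "l = p / of_real N"
  have N: "N > 0" using assms by (simp add: N_def)
  have "of_real ((norm (x - scaleC l y))\<^sup>2) = cinner (x - scaleC l y) (x - scaleC l y)"
    by (simp add: cinner_self)
  also have "\<dots> = cinner x x - l * cinner y x - cnj l * p + l * cnj l * cinner y y"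
    by (simp add: cinner_diff_left cinner_diff_right cinner_scaleC_left cinner_scaleC_right
        p_def algebra_simps)
  also have "\<dots> = of_real ((norm x)\<^sup>2) - l * cnj p - cnj l * p + l * cnj l * of_real N"
    by (simp add: cinner_self N_def p_def cinner_commute[of y x])
  also have "\<dots> = of_real ((norm x)\<^sup>2 - (cmod p)\<^sup>2 / N)"
    using N by (simp add: l_def field_simps complex_norm_square[symmetric] power2_eq_square)
  finally show ?thesis unfolding p_def N_def l_def by (metis of_real_eq_iff)
qed

lemma cinner_Cauchy_Schwarz: "cmod (cinner (x::'a::complex_hilbert) y) \<le> norm x * norm y"
proof (cases "y = 0")
  case False
  have "0 \<le> (norm x)\<^sup>2 - (cmod (cinner x y))\<^sup>2 / (norm y)\<^sup>2"
    using norm_diff_projection_squared[OF False, of x] by (metis zero_le_power2)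
  then have "(cmod (cinner x y))\<^sup>2 \<le> (norm x * norm y)\<^sup>2"
    using False by (simp add: field_simps)
  then show ?thesis by (rule power2_le_imp_le) simp
qed simp

lemma parallelogram_law:
  fixes a b :: "'a::complex_hilbert"
  shows "(norm (a + b))\<^sup>2 + (norm (a - b))\<^sup>2 = 2 * (norm a)\<^sup>2 + 2 * (norm b)\<^sup>2"
proof -
  have "complex_of_real ((norm (a + b))\<^sup>2 + (norm (a - b))\<^sup>2)
      = cinner (a + b) (a + b) + cinner (a - b) (a - b)"
    by (simp add: cinner_self)
  also have "\<dots> = 2 * cinner a a + 2 * cinner b b"
    by (simp add: cinner_add_left cinner_add_right cinner_diff_left cinner_diff_right)
  also have "\<dots> = complex_of_real (2 * (norm a)\<^sup>2 + 2 * (norm b)\<^sup>2)"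
    by (simp add: cinner_self)
  finally show ?thesis by (metis of_real_eq_iff)
qed

lemma Cauchy_minimizing_sequence:
  fixes X :: "nat \<Rightarrow> 'a::complex_hilbert"
  assumes midpoint: "\<And>x y. x \<in> H \<Longrightarrow> y \<in> H \<Longrightarrow> scaleR (1/2) (x + y) \<in> H"
    and lower: "\<And>h. h \<in> H \<Longrightarrow> d \<le> norm h"
    and X: "\<And>n. X n \<in> H"
    and lim: "(\<lambda>n. norm (X n)) \<longlonglongrightarrow> d"
  shows "Cauchy X"
proof (rule CauchyI)
  fix \<epsilon> :: real assume "0 < \<epsilon>"
  have d: "0 \<le> d" using lim by (rule LIMSEQ_le_const) simp
  have "(\<lambda>n. (norm (X n))\<^sup>2 - d\<^sup>2) \<longlonglongrightarrow> d\<^sup>2 - d\<^sup>2"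
    by (intro tendsto_intros lim)
  then have "\<forall>\<^sub>F n in sequentially. (norm (X n))\<^sup>2 - d\<^sup>2 < \<epsilon>\<^sup>2 / 4"
    using \<open>0 < \<epsilon>\<close> by (intro order_tendstoD) auto
  then obtain M where M: "\<And>n. n \<ge> M \<Longrightarrow> (norm (X n))\<^sup>2 - d\<^sup>2 < \<epsilon>\<^sup>2 / 4"
    by (auto simp: eventually_sequentially)
  have "norm (X m - X n) < \<epsilon>" if "m \<ge> M" "n \<ge> M" for m n
  proof -
    have "2 * d \<le> norm (X m + X n)"
      using lower[OF midpoint[OF X X, of m n]] by simp
    then have "4 * d\<^sup>2 \<le> (norm (X m + X n))\<^sup>2"
      using power_mono[of "2 * d" _ 2] d by (simp add: power_mult_distrib)
    then have "(norm (X m - X n))\<^sup>2 < \<epsilon>\<^sup>2"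
      using parallelogram_law[of "X m" "X n"] M[OF \<open>m \<ge> M\<close>] M[OF \<open>n \<ge> M\<close>] by linarith
    then show ?thesis using \<open>0 < \<epsilon>\<close> by (simp add: power_less_imp_less_base)
  qed
  then show "\<exists>M. \<forall>m\<ge>M. \<forall>n\<ge>M. norm (X m - X n) < \<epsilon>" by blast
qed

lemma exists_min_norm:
  fixes H :: "'a::complex_hilbert set"
  assumes "closed H" and "H \<noteq> {}"
    and midpoint: "\<And>x y. x \<in> H \<Longrightarrow> y \<in> H \<Longrightarrow> scaleR (1/2) (x + y) \<in> H"
  shows "\<exists>w\<in>H. \<forall>h\<in>H. norm w \<le> norm h"
proof -
  define d where "d = Inf (norm ` H)"
  have lower: "d \<le> norm h" if "h \<in> H" for h
    unfolding d_def using that by (intro cInf_lower bdd_belowI[of _ 0]) auto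
  have "\<exists>x\<in>H. norm x < d + inverse (real (Suc n))" for n
  proof -
    have "Inf (norm ` H) < d + inverse (real (Suc n))" by (simp add: d_def)
    then show ?thesis using cInf_lessD[of "norm ` H"] \<open>H \<noteq> {}\<close> by blast
  qed
  then obtain X where X: "\<And>n. X n \<in> H" and X_less: "\<And>n. norm (X n) < d + inverse (real (Suc n))"
    by metis
  have upper: "(\<lambda>n. d + inverse (real (Suc n))) \<longlonglongrightarrow> d"
    using tendsto_add[OF tendsto_const LIMSEQ_inverse_real_of_nat, of d] by simp
  have lim: "(\<lambda>n. norm (X n)) \<longlonglongrightarrow> d"
    using lower[OF X] X_less
    by (intro tendsto_sandwich[OF _ _ tendsto_const upper] always_eventually allI)
      (auto intro: less_imp_le)
  obtain w where w: "X \<longlonglongrightarrow> w"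
    using Cauchy_minimizing_sequence[OF midpoint lower X lim] Cauchy_convergent_iff convergent_def
    by blast
  have "w \<in> H" using closed_sequentially[OF \<open>closed H\<close> X w] .
  moreover have "norm w = d" using tendsto_norm[OF w] lim by (rule LIMSEQ_unique)
  ultimately show ?thesis using lower by auto
qed

text \<open>Riesz representation: the vector of minimal norm on the hyperplane \<open>f = 1\<close> is
  orthogonal to the kernel of \<open>f\<close>, so a multiple of it represents \<open>f\<close>.\<close>
lemma Riesz_representation:
  fixes f :: "'a::complex_hilbert \<Rightarrow> complex"
  assumes add: "\<And>x y. f (x + y) = f x + f y"
    and scale: "\<And>a x. f (scaleC a x) = a * f x"
    and bounded: "\<And>x. cmod (f x) \<le> M * norm x"
  shows "\<exists>z. \<forall>x. f x = cinner x z"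
proof (cases "\<forall>x. f x = 0")
  case False
  have f_diff: "f (x - y) = f x - f y" for x y
    using add[of "x - y" y] by simp
  obtain u0 where "f u0 \<noteq> 0" using False by blast
  define H where "H = {x. f x = 1}"
  have "scaleC (1 / f u0) u0 \<in> H" using \<open>f u0 \<noteq> 0\<close> by (simp add: H_def scale)
  have "0 \<le> M"
  proof (rule ccontr)
    assume "\<not> 0 \<le> M"
    then show False using bounded[of u0] \<open>f u0 \<noteq> 0\<close>
      by (smt (verit) norm_ge_zero zero_less_norm_iff mult_nonpos_nonneg)
  qed
  have "M-lipschitz_on UNIV f"
    using bounded \<open>0 \<le> M\<close> by (intro lipschitz_onI) (simp_all add: dist_norm f_diff[symmetric])
  then have "continuous_on UNIV f" by (rule lipschitz_on_continuous_on)
  then have "closed H"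
    unfolding H_def by (intro closed_Collect_eq continuous_on_const)
  moreover have "scaleR (1/2) (x + y) \<in> H" if "x \<in> H" "y \<in> H" for x y
    using that scale[of "of_real (1/2)" "x + y"] scaleC_of_real[of "1/2" "x + y"]
    by (simp add: H_def add)
  ultimately obtain w where "w \<in> H" and w_min: "\<And>h. h \<in> H \<Longrightarrow> norm w \<le> norm h"
    using exists_min_norm[of H] \<open>scaleC (1 / f u0) u0 \<in> H\<close> by blast
  then have fw: "f w = 1" by (simp add: H_def)
  have orth: "cinner w m = 0" if "f m = 0" for m
  proof (cases "m = 0")
    case False
    define h where "h = w - scaleC (cinner w m / of_real ((norm m)\<^sup>2)) m"
    have "h \<in> H" using fw that by (simp add: H_def h_def f_diff scale)
    then have "(norm w)\<^sup>2 \<le> (norm h)\<^sup>2" using w_min by (simp add: power_mono)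
    also have "\<dots> = (norm w)\<^sup>2 - (cmod (cinner w m))\<^sup>2 / (norm m)\<^sup>2"
      unfolding h_def by (rule norm_diff_projection_squared[OF False])
    finally have "(cmod (cinner w m))\<^sup>2 / (norm m)\<^sup>2 \<le> 0" by simp
    then show ?thesis using False by (simp add: divide_le_0_iff)
  qed simp
  have "w \<noteq> 0" using fw scale[of 0 0] by auto
  have "f x = cinner x (scaleR (1 / (norm w)\<^sup>2) w)" for x
  proof -
    have "cinner w (x - scaleC (f x) w) = 0" by (rule orth) (simp add: f_diff scale fw)
    then have "cinner x w = f x * of_real ((norm w)\<^sup>2)"
      by (subst cinner_commute) (simp add: cinner_diff_right cinner_scaleC_right cinner_self)
    then show ?thesis using \<open>w \<noteq> 0\<close> by (simp add: cinner_scaleR_right)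
  qed
  then show ?thesis by blast
qed (auto intro: exI[of _ 0])

text \<open>\<open>adjoint\<close> is a definite description; Riesz representation supplies the vector it
  describes.\<close>
lemma cinner_adjoint:
  fixes A :: "'a::complex_hilbert \<Rightarrow> 'a"
  assumes "bounded_clinear_op A"
  shows "cinner (A x) y = cinner x (adjoint A y)"
proof -
  obtain K where K: "\<And>x. norm (A x) \<le> K * norm x"
    and add: "\<And>x y. A (x + y) = A x + A y" and scale: "\<And>a x. A (scaleC a x) = scaleC a (A x)"
    using assms unfolding bounded_clinear_op_def by blast
  have bound: "cmod (cinner (A x) y) \<le> K * norm y * norm x" for x
  proof -
    have "cmod (cinner (A x) y) \<le> norm (A x) * norm y" by (rule cinner_Cauchy_Schwarz)
    also have "\<dots> \<le> K * norm x * norm y" using K[of x] by (simp add: mult_right_mono)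
    finally show ?thesis by (simp add: ac_simps)
  qed
  have "\<exists>z. \<forall>x. cinner (A x) y = cinner x z"
    by (rule Riesz_representation[OF _ _ bound]) (simp_all add: add scale cinner_add_left cinner_scaleC_left)
  then obtain z where z: "\<forall>x. cinner (A x) y = cinner x z" ..
  have unique: "z' = z" if "\<forall>x. cinner (A x) y = cinner x z'" for z'
  proof -
    have "cinner (z' - z) (z' - z) = 0" using that z by (simp add: cinner_diff_right)
    then show ?thesis by (simp add: cinner_self)
  qed
  have "\<forall>x. cinner (A x) y = cinner x (adjoint A y)"
    unfolding adjoint_def using z unique by (rule theI)
  then show ?thesis by blast
qed

lemma adjoint_bounded:
  fixes A :: "'a::complex_hilbert \<Rightarrow> 'a"
  assumes "bounded_clinear_op A"
  obtains K where "0 \<le> K" and "\<And>y. norm (adjoint A y) \<le> K * norm y"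
proof -
  obtain K0 where K0: "\<And>x. norm (A x) \<le> K0 * norm x"
    using assms unfolding bounded_clinear_op_def by blast
  define K where "K = max K0 0"
  have K: "norm (A x) \<le> K * norm x" for x
    using K0[of x] mult_right_mono[OF max.cobounded1[of K0 0] norm_ge_zero[of x]]
    unfolding K_def by linarith
  have "norm (adjoint A y) \<le> K * norm y" for y
  proof -
    define v where "v = adjoint A y"
    have "(norm v)\<^sup>2 = cmod (cinner (A v) y)"
      by (simp add: cinner_self cinner_adjoint[OF assms] v_def flip: of_real_power)
    also have "\<dots> \<le> norm (A v) * norm y" by (rule cinner_Cauchy_Schwarz)
    also have "\<dots> \<le> K * norm v * norm y" using K[of v] by (rule mult_right_mono) simp
    finally have "norm v * norm v \<le> norm v * (K * norm y)"
      by (simp add: power2_eq_square ac_simps)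
    then have "norm v \<le> K * norm y"
      by (cases "v = 0") (simp_all add: K_def mult_le_cancel_left_pos)
    then show ?thesis by (simp add: v_def)
  qed
  then show ?thesis by (rule that[rotated]) (simp add: K_def)
qed

lemma norm_funpow_le:
  fixes B :: "'a::real_normed_vector \<Rightarrow> 'a"
  assumes "\<And>y. norm (B y) \<le> K * norm y" and "0 \<le> K"
  shows "norm ((B ^^ n) g) \<le> K ^ n * norm g"
proof (induction n)
  case (Suc n)
  have "norm ((B ^^ Suc n) g) \<le> K * norm ((B ^^ n) g)" using assms(1) by simp
  also have "\<dots> \<le> K * (K ^ n * norm g)" using Suc assms(2) by (rule mult_left_mono)
  finally show ?case by simp
qed simp

text \<open>The exponential series converges uniformly on \<open>[0, T]\<close> by the Weierstrass M-test
  with the majorant \<open>(T K)\<^sup>n / n! \<parallel>g\<parallel>\<close>.\<close>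
lemma continuous_on_exp_op:
  fixes B :: "'a::complex_hilbert \<Rightarrow> 'a"
  assumes "\<And>y. norm (B y) \<le> K * norm y" and "0 \<le> K"
  shows "continuous_on {0..T} (\<lambda>t. exp_op t B g)"
proof -
  define f where "f n t = scaleR (t ^ n / fact n) ((B ^^ n) g)" for n t
  have "uniform_limit {0..T} (\<lambda>n t. \<Sum>i<n. f i t) (\<lambda>t. \<Sum>i. f i t) sequentially"
  proof (rule Weierstrass_m_test)
    show "summable (\<lambda>n. inverse (fact n) * (T * K) ^ n * norm g)"
      by (intro summable_mult2 summable_exp)
    fix n t assume t: "t \<in> {0..T}"
    have "norm (f n t) = t ^ n / fact n * norm ((B ^^ n) g)" using t by (simp add: f_def)
    also have "\<dots> \<le> T ^ n / fact n * (K ^ n * norm g)"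
      using t norm_funpow_le[OF assms, of n g]
      by (intro mult_mono divide_right_mono power_mono) auto
    also have "\<dots> = inverse (fact n) * (T * K) ^ n * norm g"
      by (simp add: field_simps)
    finally show "norm (f n t) \<le> inverse (fact n) * (T * K) ^ n * norm g" .
  qed
  moreover have "\<forall>\<^sub>F n in sequentially. continuous_on {0..T} (\<lambda>t. \<Sum>i<n. f i t)"
    unfolding f_def by (intro always_eventually allI continuous_intros) auto
  ultimately have "continuous_on {0..T} (\<lambda>t. \<Sum>i. f i t)"
    by (intro uniform_limit_theorem) auto
  then show ?thesis by (simp add: exp_op_def f_def)
qed

definition cspan :: "'a::complex_hilbert set \<Rightarrow> 'a set" where
  "cspan S = {\<Sum>s\<in>S. scaleC (c s) s | c. True}"

lemma cspan_empty: "cspan {} = {0}"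
  by (simp add: cspan_def)

lemma add_scaleC_in_cspan_insert:
  assumes "finite S" and "y \<in> cspan S"
  shows "y + scaleC a v \<in> cspan (insert v S)"
proof -
  obtain c where y: "y = (\<Sum>s\<in>S. scaleC (c s) s)"
    using assms(2) by (auto simp: cspan_def)
  define c' where "c' = c(v := (if v \<in> S then c v else 0) + a)"
  have "(\<Sum>s\<in>S - {v}. scaleC (c' s) s) = (\<Sum>s\<in>S - {v}. scaleC (c s) s)"
    by (rule sum.cong) (auto simp: c'_def)
  then have "(\<Sum>s\<in>insert v S. scaleC (c' s) s)
      = scaleC (c' v) v + (\<Sum>s\<in>S - {v}. scaleC (c s) s)"
    using assms(1) by (simp add: sum.insert_remove)
  also have "\<dots> = y + scaleC a v"
  proof (cases "v \<in> S")
    case True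
    then show ?thesis
      using assms(1) by (simp add: y c'_def sum.remove scaleC_add_left ac_simps)
  next
    case False
    then show ?thesis by (simp add: y c'_def)
  qed
  finally show ?thesis unfolding cspan_def by (auto intro!: exI[of _ c'])
qed

text \<open>Induction on \<open>C\<close>: a combination of two vectors orthogonal to \<open>C\<close> that lie outside
  successively larger spans is also orthogonal to the next vector \<open>c\<close>.\<close>
lemma exists_orthogonal_not_in_cspan:
  assumes "\<not> finite_dim_complex TYPE('a::complex_hilbert)"
    and "finite C" and "finite (S :: 'a set)"
  shows "\<exists>x. x \<notin> cspan S \<and> (\<forall>c\<in>C. cinner x c = 0)"
  using assms(2,3)
proof (induction C arbitrary: S rule: finite_induct)
  case empty
  then show ?case using assms(1) unfolding finite_dim_complex_def cspan_def by blast
next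
  case (insert c C)
  obtain x1 where x1: "x1 \<notin> cspan S" "\<And>c'. c' \<in> C \<Longrightarrow> cinner x1 c' = 0"
    using insert.IH[OF insert.prems] by blast
  obtain x2 where x2: "x2 \<notin> cspan (insert x1 S)" "\<And>c'. c' \<in> C \<Longrightarrow> cinner x2 c' = 0"
    using insert.IH[of "insert x1 S"] insert.prems by blast
  show ?case
  proof (cases "cinner x1 c = 0")
    case True
    then show ?thesis using x1 by blast
  next
    case False
    define a where "a = cinner x2 c / cinner x1 c"
    have "x2 - scaleC a x1 \<notin> cspan S"
      using add_scaleC_in_cspan_insert[OF insert.prems, of _ a x1] x2(1) by fastforce
    moreover have "\<forall>c'\<in>insert c C. cinner (x2 - scaleC a x1) c' = 0"
      using x1(2) x2(2) False by (auto simp: a_def cinner_diff_left cinner_scaleC_left)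
    ultimately show ?thesis by blast
  qed
qed

lemma exists_unit_orthogonal:
  assumes "\<not> finite_dim_complex TYPE('a::complex_hilbert)" and "finite (C :: 'a set)"
  obtains x where "norm x = 1" and "\<And>c. c \<in> C \<Longrightarrow> cinner x c = 0"
proof -
  obtain x0 where "x0 \<noteq> 0" and x0: "\<And>c. c \<in> C \<Longrightarrow> cinner x0 c = 0"
    using exists_orthogonal_not_in_cspan[OF assms, of "{}"] by (auto simp: cspan_empty)
  show ?thesis
    by (rule that[of "scaleR (1 / norm x0) x0"]) (simp_all add: \<open>x0 \<noteq> 0\<close> x0 cinner_scaleR_left)
qed

lemma exists_unit_almost_orthogonal_compact:
  fixes V :: "'a::complex_hilbert set"
  assumes "\<not> finite_dim_complex TYPE('a)" and "compact V" and "0 < \<epsilon>"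
  obtains x where "norm x = 1" and "\<And>v. v \<in> V \<Longrightarrow> cmod (cinner x v) < \<epsilon>"
proof -
  obtain k where "finite k" and cover: "V \<subseteq> (\<Union>c\<in>k. ball c \<epsilon>)"
    using seq_compact_imp_totally_bounded[OF compact_imp_seq_compact[OF \<open>compact V\<close>]] \<open>0 < \<epsilon>\<close>
    by blast
  obtain x where x: "norm x = 1" and orth: "\<And>c. c \<in> k \<Longrightarrow> cinner x c = 0"
    using exists_unit_orthogonal[OF assms(1) \<open>finite k\<close>] by blast
  have "cmod (cinner x v) < \<epsilon>" if "v \<in> V" for v
  proof -
    obtain c where "c \<in> k" and "dist c v < \<epsilon>" using cover \<open>v \<in> V\<close> by auto
    have "cinner x v = cinner x (v - c)" using orth[OF \<open>c \<in> k\<close>] by (simp add: cinner_diff_right)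
    then have "cmod (cinner x v) \<le> norm x * norm (v - c)" by (simp add: cinner_Cauchy_Schwarz)
    also have "\<dots> < \<epsilon>" using \<open>dist c v < \<epsilon>\<close> x by (simp add: dist_norm norm_minus_commute)
    finally show ?thesis .
  qed
  with x show ?thesis by (rule that)
qed

lemma infsum_nn_integral_interval_le:
  fixes F :: "'b \<Rightarrow> real \<Rightarrow> real"
  assumes "finite G" and "0 \<le> b" and "0 \<le> \<tau>"
    and bound: "\<And>g t. g \<in> G \<Longrightarrow> t \<in> {0..<\<tau>} \<Longrightarrow> F g t \<le> b"
  shows "(\<Sum>\<^sub>\<infinity>g\<in>G. \<integral>\<^sup>+ t\<in>{0..<\<tau>}. ennreal (F g t) \<partial>lborel) \<le> ennreal (real (card G) * b * \<tau>)"
proof -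
  have "(\<integral>\<^sup>+ t\<in>{0..<\<tau>}. ennreal (F g t) \<partial>lborel) \<le> ennreal (b * \<tau>)" if "g \<in> G" for g
  proof -
    have "(\<integral>\<^sup>+ t\<in>{0..<\<tau>}. ennreal (F g t) \<partial>lborel) \<le> (\<integral>\<^sup>+ t. ennreal b * indicator {0..<\<tau>} t \<partial>lborel)"
      using bound[OF that] by (intro nn_integral_mono) (auto simp: indicator_def intro: ennreal_leI)
    also have "\<dots> = ennreal (b * \<tau>)"
      using assms(2,3) by (simp add: nn_integral_cmult_indicator ennreal_mult)
    finally show ?thesis .
  qed
  then have "(\<Sum>g\<in>G. \<integral>\<^sup>+ t\<in>{0..<\<tau>}. ennreal (F g t) \<partial>lborel) \<le> (\<Sum>g\<in>G. ennreal (b * \<tau>))"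
    by (rule sum_mono)
  also have "\<dots> = ennreal (real (card G) * b * \<tau>)"
    using assms(2,3) by (simp add: ennreal_of_nat_eq_real_of_nat ennreal_mult mult.assoc)
  finally show ?thesis using \<open>finite G\<close> by simp
qed

lemma compact_exp_op_adjoint_orbits:
  fixes A :: "'a::complex_hilbert \<Rightarrow> 'a"
  assumes "bounded_clinear_op A" and "finite G"
  shows "compact (\<Union>g\<in>G. (\<lambda>t. exp_op t (adjoint A) g) ` {0..T})"
proof -
  obtain K where "0 \<le> K" and "\<And>y. norm (adjoint A y) \<le> K * norm y"
    using adjoint_bounded[OF assms(1)] by blast
  then show ?thesis
    using \<open>finite G\<close> by (intro compact_UN compact_continuous_image continuous_on_exp_op) auto
qed

theorem corollary3p7:
  fixes A :: "'a::complex_hilbert \<Rightarrow> 'a" and G :: "'a set" and \<tau> :: real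
  assumes "\<not> finite_dim_complex TYPE('a)"
    and "separable_hilbert TYPE('a)"
    and "bounded_clinear_op A"
    and "0 < \<tau>"
    and "countable G"
    and "semi_continuous_frame A G \<tau>"
  shows "infinite G"
proof
  assume "finite G"
  obtain c1 where "c1 > 0" and lower_frame_bound: "\<And>x. ennreal (c1 * (norm x)\<^sup>2)
       \<le> (\<Sum>\<^sub>\<infinity>g\<in>G. \<integral>\<^sup>+ t\<in>{0..<\<tau>}. ennreal ((cmod (cinner x (exp_op t (adjoint A) g)))\<^sup>2) \<partial>lborel)"
    using assms(6) unfolding semi_continuous_frame_def by blast
  define \<epsilon> where "\<epsilon> = sqrt (c1 / (real (card G) * \<tau> + 1))"
  have "0 < \<epsilon>" using \<open>c1 > 0\<close> \<open>0 < \<tau>\<close> by (simp add: \<epsilon>_def add_nonneg_pos)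
  obtain x where "norm x = 1" and small:
      "\<And>v. v \<in> (\<Union>g\<in>G. (\<lambda>t. exp_op t (adjoint A) g) ` {0..\<tau>}) \<Longrightarrow> cmod (cinner x v) < \<epsilon>"
    using exists_unit_almost_orthogonal_compact
        [OF assms(1) compact_exp_op_adjoint_orbits[OF assms(3) \<open>finite G\<close>] \<open>0 < \<epsilon>\<close>]
    by blast
  have "ennreal c1 \<le> (\<Sum>\<^sub>\<infinity>g\<in>G. \<integral>\<^sup>+ t\<in>{0..<\<tau>}. ennreal ((cmod (cinner x (exp_op t (adjoint A) g)))\<^sup>2) \<partial>lborel)"
    using lower_frame_bound[of x] \<open>norm x = 1\<close> by simp
  also have "\<dots> \<le> ennreal (real (card G) * \<epsilon>\<^sup>2 * \<tau>)"
  proof (rule infsum_nn_integral_interval_le)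
    fix g t assume "g \<in> G" and "t \<in> {0..<\<tau>}"
    then have "cmod (cinner x (exp_op t (adjoint A) g)) < \<epsilon>"
      by (intro small UN_I imageI) auto
    then show "(cmod (cinner x (exp_op t (adjoint A) g)))\<^sup>2 \<le> \<epsilon>\<^sup>2"
      by (intro power_mono) auto
  qed (use \<open>finite G\<close> \<open>0 < \<tau>\<close> in auto)
  finally have "c1 \<le> real (card G) * \<epsilon>\<^sup>2 * \<tau>"
    using \<open>0 < \<tau>\<close> by simp
  also have "\<dots> = c1 * (real (card G) * \<tau>) / (real (card G) * \<tau> + 1)"
    using \<open>c1 > 0\<close> \<open>0 < \<tau>\<close> by (simp add: \<epsilon>_def add_nonneg_pos)
  also have "\<dots> < c1"
    using \<open>c1 > 0\<close> \<open>0 < \<tau>\<close> by (simp add: add_nonneg_pos divide_less_eq)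
  finally show False by simp
qed

end
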